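(* Let $n\ge2$, let $Z=(z_1,z_2,\dots)\in{\mathbb{B}}_n^\infty$, let $0\ne A\in{\mathfrak{A}}_n$ and let $\varepsilon_i>0$ for $i\ge1$. Then there exist a word $w\in\mathbb{F}_n^+$ of length $k\ge2$ and $Z' = (z'_1,\dots,z'_{k+1})\in{\mathbb{B}}_n^{k+1}$, whose coordinates $\{z'_{ij}:1\le i\le k+1,\ 1\le j\le n\}$ are all distinct and which satisfies $\|z'_i - z_i\|<\varepsilon_i$ for $1\le i\le k+1$, such that $\rho_{Z',w}(A)\ne0$.
   Context: ${\mathfrak{A}}_n$ is the non-commutative disc algebra generated by the left creation operators $S_1,\dots,S_n$ on full Fock space. For a word $w=l_1\cdots l_k\in\mathbb{F}_n^+$ of length $k\ge2$ and points $z'_1,\dots,z'_{k+1}\in\delta{\mathbb{B}}_n$ for some $0\le\delta<1$ (writing $z'_i=(z'_{i1},\dots,z'_{in})$), $\rho_{Z',w}$ denotes the completely contractive representation (of ${\mathfrak{A}}_n$, and of any semicrossed product ${\mathfrak{A}}_n\times_\phi{\mathbb{Z}}^+$ by sending the generator $U$ to $0$) into $(k+1)\times(k+1)$ upper triangular matrices given by $\rho_{Z',w}(S_j) = \operatorname{diag}(z'_{ij})_{i=1}^{k+1} + (1-\delta)\sum_{i:\,l_i=j}E_{i,i+1}$, $1\le j\le n$, where $E_{i,i+1}$ are matrix units. *)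

theory Defs
  imports "HOL-Analysis.Analysis"
begin

text \<open>Full Fock space over n letters: letters are elements of a finite type 'n with
  CARD('n) = n; words are lists; vectors are square-summable functions on words.\<close>

definition fock_vec :: "('n list \<Rightarrow> complex) \<Rightarrow> bool" where
  "fock_vec f \<longleftrightarrow> (\<lambda>w. (cmod (f w))^2) summable_on UNIV"

definition fnorm :: "('n list \<Rightarrow> complex) \<Rightarrow> real" where
  "fnorm f = sqrt (infsum (\<lambda>w. (cmod (f w))^2) UNIV)"

text \<open>Non-commutative polynomials: finitely supported coefficient functions on words.\<close>
definition ncpoly :: "('n list \<Rightarrow> complex) \<Rightarrow> bool" where
  "ncpoly c \<longleftrightarrow> finite {v. c v \<noteq> 0}"

text \<open>Action of the polynomial sum_v c_v S_v on Fock space, where S_v is the product of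
  left creation operators (S_v xi_u = xi_(v u)).\<close>
definition polyop :: "('n list \<Rightarrow> complex) \<Rightarrow> ('n list \<Rightarrow> complex) \<Rightarrow> ('n list \<Rightarrow> complex)" where
  "polyop c f = (\<lambda>w. \<Sum>i\<le>length w. c (take i w) * f (drop i w))"

definition creation :: "'n \<Rightarrow> ('n list \<Rightarrow> complex) \<Rightarrow> ('n list \<Rightarrow> complex)" where
  "creation j f = (\<lambda>w. case w of [] \<Rightarrow> 0 | l # u \<Rightarrow> (if l = j then f u else 0))"

definition disc_alg :: "(('n list \<Rightarrow> complex) \<Rightarrow> ('n list \<Rightarrow> complex)) \<Rightarrow> bool" where
  "disc_alg A \<longleftrightarrow> (\<forall>f. fock_vec f \<longrightarrow> fock_vec (A f)) \<and>
     (\<forall>\<epsilon>>0. \<exists>c. ncpoly c \<and>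
        (\<forall>f. fock_vec f \<longrightarrow> fnorm (A f - polyop c f) \<le> \<epsilon> * fnorm f))"

definition approx_seq ::
  "(('n list \<Rightarrow> complex) \<Rightarrow> ('n list \<Rightarrow> complex)) \<Rightarrow> (nat \<Rightarrow> 'n list \<Rightarrow> complex) \<Rightarrow> bool" where
  "approx_seq A cs \<longleftrightarrow> (\<forall>m. ncpoly (cs m)) \<and>
     (\<forall>\<epsilon>>0. \<exists>M. \<forall>m\<ge>M. \<forall>f. fock_vec f \<longrightarrow> fnorm (A f - polyop (cs m) f) \<le> \<epsilon> * fnorm f)"

text \<open>Matrices of size m indexed by 1..m (entries outside are irrelevant / zero).\<close>
definition mmul :: "nat \<Rightarrow> (nat \<Rightarrow> nat \<Rightarrow> complex) \<Rightarrow> (nat \<Rightarrow> nat \<Rightarrow> complex) \<Rightarrow> (nat \<Rightarrow> nat \<Rightarrow> complex)" where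
  "mmul m X Y = (\<lambda>i j. \<Sum>l\<in>{1..m}. X i l * Y l j)"

definition midentity :: "nat \<Rightarrow> (nat \<Rightarrow> nat \<Rightarrow> complex)" where
  "midentity m = (\<lambda>i j. if i = j \<and> 1 \<le> i \<and> i \<le> m then 1 else 0)"

text \<open>rho_{Z',w}(S_j), with w = l_1 ... l_k (l_i = w ! (i-1)), points z'_i = Z' i (i = 1..k+1),
  and parameter delta.\<close>
definition rho_S :: "(nat \<Rightarrow> complex^'n) \<Rightarrow> 'n list \<Rightarrow> real \<Rightarrow> 'n \<Rightarrow> (nat \<Rightarrow> nat \<Rightarrow> complex)" where
  "rho_S Z' w \<delta> j = (\<lambda>i i'.
     (if i = i' \<and> 1 \<le> i \<and> i \<le> length w + 1 then Z' i $ j else 0) +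
     (if i' = i + 1 \<and> 1 \<le> i \<and> i \<le> length w \<and> w ! (i - 1) = j
        then complex_of_real (1 - \<delta>) else 0))"

definition rho_word :: "(nat \<Rightarrow> complex^'n) \<Rightarrow> 'n list \<Rightarrow> real \<Rightarrow> 'n list \<Rightarrow> (nat \<Rightarrow> nat \<Rightarrow> complex)" where
  "rho_word Z' w \<delta> v =
     foldr (\<lambda>j M. mmul (length w + 1) (rho_S Z' w \<delta> j) M) v (midentity (length w + 1))"

definition rho_poly :: "(nat \<Rightarrow> complex^'n) \<Rightarrow> 'n list \<Rightarrow> real \<Rightarrow> ('n list \<Rightarrow> complex) \<Rightarrow> (nat \<Rightarrow> nat \<Rightarrow> complex)" where
  "rho_poly Z' w \<delta> c = (\<lambda>i j. \<Sum>v\<in>{v. c v \<noteq> 0}. c v * rho_word Z' w \<delta> v i j)"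

text \<open>Extension of rho_{Z',w} to the disc algebra by (norm-)continuity.\<close>
definition rho_ext :: "(nat \<Rightarrow> complex^'n) \<Rightarrow> 'n list \<Rightarrow> real \<Rightarrow>
    (('n list \<Rightarrow> complex) \<Rightarrow> ('n list \<Rightarrow> complex)) \<Rightarrow> (nat \<Rightarrow> nat \<Rightarrow> complex)" where
  "rho_ext Z' w \<delta> A = (\<lambda>i j. lim (\<lambda>m. rho_poly Z' w \<delta> ((SOME cs. approx_seq A cs) m) i j))"

end

theory Submission
  imports Defs "HOL-Complex_Analysis.Conformal_Mappings"
begin

text \<open>Let \<open>F = A vacuum\<close> be the symbol of \<open>A\<close>. Every element of the disc algebra acts by
  prefix convolution with its symbol, so \<open>F u \<noteq> 0\<close> for some word \<open>u\<close>; take \<open>w = u l l\<close>.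
  If \<open>\<parallel>z'\<^sub>i\<parallel> \<le> \<mu> < \<delta>\<close>, the matrices \<open>\<rho>(S\<^sub>j)\<close> form a row contraction up to the factor
  \<open>\<mu> + (1 - \<delta>) < 1\<close>, so the entries of \<open>\<rho>(S\<^sub>v)\<close> decay geometrically in \<open>|v|\<close> and
  \<open>\<rho>(A)\<^sub>1\<^sub>,\<^sub>|\<^sub>u\<^sub>|\<^sub>+\<^sub>1 = \<Sum>\<^sub>v F v \<rho>(S\<^sub>v)\<^sub>1\<^sub>,\<^sub>|\<^sub>u\<^sub>|\<^sub>+\<^sub>1\<close>.

  Perturb the given points to points \<open>Y\<close> with distinct coordinates and put \<open>Z' = t Y\<close>.
  Conjugation by a diagonal matrix trades the superdiagonal weight \<open>1 - \<delta>\<close> for a fixed \<open>\<beta>\<close>;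
  the entry then becomes, up to a nonzero factor, a power series in \<open>t\<close> that does not depend
  on \<open>\<delta>\<close>, whose coefficients vanish below degree \<open>|u|\<close> and equal \<open>F u \<beta>\<^sup>|\<^sup>u\<^sup>|\<close> in degree
  \<open>|u|\<close>. Its zeros are isolated, so some \<open>t\<close> close to \<open>1\<close> works for all \<open>\<delta>\<close> at once.\<close>

section \<open>Bidiagonal matrices\<close>

text \<open>The diagonal (the points) and the superdiagonal (the weight \<open>1 - \<delta>\<close>) of
  \<open>\<rho>\<^sub>Z\<^sub>',\<^sub>w(S\<^sub>j)\<close> carry independent scalars \<open>a\<close> and \<open>b\<close>, so that the two can be traded
  against each other.\<close>

definition bidiag :: "(nat \<Rightarrow> complex^'n) \<Rightarrow> 'n list \<Rightarrow> complex \<Rightarrow> complex \<Rightarrow> 'n \<Rightarrow> nat \<Rightarrow> nat \<Rightarrow> complex"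
  where "bidiag Y w a b j = (\<lambda>p q.
     (if p = q \<and> 1 \<le> p \<and> p \<le> length w + 1 then a * Y p $ j else 0) +
     (if q = p + 1 \<and> 1 \<le> p \<and> p \<le> length w \<and> w ! (p - 1) = j then b else 0))"

definition bidiag_word :: "(nat \<Rightarrow> complex^'n) \<Rightarrow> 'n list \<Rightarrow> complex \<Rightarrow> complex \<Rightarrow> 'n list \<Rightarrow> nat \<Rightarrow> nat \<Rightarrow> complex"
  where "bidiag_word Y w a b v =
     foldr (\<lambda>j M. mmul (length w + 1) (bidiag Y w a b j) M) v (midentity (length w + 1))"

lemma bidiag_word_Nil [simp]: "bidiag_word Y w a b [] = midentity (length w + 1)"
  by (simp add: bidiag_word_def)

lemma bidiag_word_Cons [simp]:
  "bidiag_word Y w a b (j # v) = mmul (length w + 1) (bidiag Y w a b j) (bidiag_word Y w a b v)"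
  by (simp add: bidiag_word_def)

lemma rho_word_eq_bidiag_word: "rho_word Z' w \<delta> = bidiag_word Z' w 1 (of_real (1 - \<delta>))"
proof -
  have "rho_S Z' w \<delta> = bidiag Z' w 1 (of_real (1 - \<delta>))"
    unfolding rho_S_def bidiag_def by (intro ext) simp
  then show ?thesis unfolding rho_word_def bidiag_word_def by simp
qed

lemma bidiag_word_scaleR_points:
  "bidiag_word (\<lambda>i. t *\<^sub>R Y i) w 1 b = bidiag_word Y w (of_real t) b"
proof -
  have c: "(t *\<^sub>R x) $ k = of_real t * (x $ k)" for x :: "complex^'n" and k
    by (simp only: vector_scaleR_component) (simp add: scaleR_conv_of_real)
  have "bidiag (\<lambda>i. t *\<^sub>R Y i) w 1 b = bidiag Y w (of_real t) b"
    unfolding bidiag_def c mult_1_left ..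
  then show ?thesis unfolding bidiag_word_def by simp
qed

lemma bidiag_nonzero_imp: "bidiag Y w a b j p l \<noteq> 0 \<Longrightarrow> l = p \<or> l = p + 1"
  by (auto simp: bidiag_def split: if_splits)

lemma bidiag_word_beyond_band: "p + length v < q \<Longrightarrow> bidiag_word Y w a b v p q = 0"
proof (induction v arbitrary: p)
  case Nil
  then show ?case by (simp add: midentity_def)
next
  case (Cons j v)
  have "bidiag Y w a b j p l * bidiag_word Y w a b v l q = 0" for l
    using Cons bidiag_nonzero_imp[of Y w a b j p l] by fastforce
  then show ?case unfolding bidiag_word_Cons mmul_def by (intro sum.neutral) simp
qed

lemma bidiag_word_band_edge:
  assumes "1 \<le> p" "p + length v \<le> length w + 1"
  shows "bidiag_word Y w a b v p (p + length v) =
    (if v = take (length v) (drop (p - 1) w) then b ^ length v else 0)"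
  using assms
proof (induction v arbitrary: p)
  case Nil
  then show ?case by (simp add: midentity_def)
next
  case (Cons j v)
  let ?K = "length w + 1"
  let ?f = "\<lambda>l. bidiag Y w a b j p l * bidiag_word Y w a b v l (p + length (j # v))"
  have "?f l = 0" if "l \<noteq> p + 1" for l
  proof (cases "l = p")
    case True
    then show ?thesis using bidiag_word_beyond_band[of l v] by simp
  qed (use that bidiag_nonzero_imp in fastforce)
  then have "(\<Sum>l\<in>{1..?K} - {p + 1}. ?f l) = 0"
    by (intro sum.neutral) blast
  moreover have "bidiag_word Y w a b (j # v) p (p + length (j # v)) =
      ?f (p + 1) + (\<Sum>l\<in>{1..?K} - {p + 1}. ?f l)"
    using Cons.prems unfolding bidiag_word_Cons mmul_def by (intro sum.remove) auto
  ultimately have "bidiag_word Y w a b (j # v) p (p + length (j # v)) = ?f (p + 1)"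
    by simp
  also have "bidiag Y w a b j p (p + 1) = (if w ! (p - 1) = j then b else 0)"
    using Cons.prems by (simp add: bidiag_def)
  also have "drop (p - 1) w = w ! (p - 1) # drop p w"
    using Cons.prems Cons_nth_drop_Suc[of "p - 1" w] by simp
  ultimately show ?case
    using Cons.IH[of "p + 1"] Cons.prems by auto
qed

text \<open>Conjugation by \<open>diag(s, s\<^sup>2, \<dots>)\<close> multiplies the superdiagonal by \<open>s\<close>.\<close>

lemma bidiag_word_conj_diag:
  "s ^ q * bidiag_word Y w a b v p q = s ^ p * bidiag_word Y w a (s * b) v p q"
proof (induction v arbitrary: p q)
  case Nil
  then show ?case by (simp add: midentity_def)
next
  case (Cons j v)
  have m: "bidiag Y w a b j p l * s ^ l = s ^ p * bidiag Y w a (s * b) j p l" for l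
    by (auto simp: bidiag_def)
  have "s ^ q * bidiag_word Y w a b (j # v) p q =
      (\<Sum>l\<in>{1..length w + 1}. bidiag Y w a b j p l * (s ^ q * bidiag_word Y w a b v l q))"
    unfolding bidiag_word_Cons mmul_def sum_distrib_left by (rule sum.cong) (auto simp: mult_ac)
  also have "\<dots> = (\<Sum>l\<in>{1..length w + 1}.
      (bidiag Y w a b j p l * s ^ l) * bidiag_word Y w a (s * b) v l q)"
    using Cons.IH by (intro sum.cong) (auto simp: mult.assoc)
  also have "\<dots> = s ^ p * bidiag_word Y w a (s * b) (j # v) p q"
    unfolding m bidiag_word_Cons mmul_def sum_distrib_left by (rule sum.cong) (auto simp: mult_ac)
  finally show ?case .
qed

lemma bidiag_word_homogeneous:
  "bidiag_word Y w (c * a) (c * b) v p q = c ^ length v * bidiag_word Y w a b v p q"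
proof (induction v arbitrary: p q)
  case (Cons j v)
  have "bidiag Y w (c * a) (c * b) j p l = c * bidiag Y w a b j p l" for l
    by (auto simp: bidiag_def)
  then show ?case
    unfolding bidiag_word_Cons mmul_def Cons.IH sum_distrib_left
    by (intro sum.cong) (auto simp: mult_ac)
qed simp

lemma bidiag_word_rescale:
  assumes "a \<noteq> 0" "b \<noteq> 0" "b\<^sub>0 \<noteq> 0"
  shows "a ^ d * bidiag_word Y w a b v 1 (d + 1) =
    (b / b\<^sub>0) ^ d * a ^ length v * bidiag_word Y w 1 b\<^sub>0 v 1 (d + 1)"
proof -
  define s where "s = b / (a * b\<^sub>0)"
  have "s ^ (d + 1) * bidiag_word Y w a (a * b\<^sub>0) v 1 (d + 1) =
      s * bidiag_word Y w a (s * (a * b\<^sub>0)) v 1 (d + 1)"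
    using bidiag_word_conj_diag[of s "d + 1" Y w a "a * b\<^sub>0" v 1] by simp
  moreover have "s * (a * b\<^sub>0) = b"
    using assms by (simp add: s_def)
  moreover have "bidiag_word Y w a (a * b\<^sub>0) v 1 (d + 1) = a ^ length v * bidiag_word Y w 1 b\<^sub>0 v 1 (d + 1)"
    using bidiag_word_homogeneous[of Y w a 1 b\<^sub>0 v 1 "d + 1"] by simp
  moreover have "a * s = b / b\<^sub>0"
    using assms by (simp add: s_def)
  ultimately show ?thesis
    using assms by (auto simp: power_add power_mult_distrib mult_ac)
qed

section \<open>Norm estimate for the entries of \<open>\<rho>\<^sub>Z\<^sub>',\<^sub>w\<close>\<close>

definition row_mult :: "nat \<Rightarrow> (nat \<Rightarrow> complex) \<Rightarrow> (nat \<Rightarrow> nat \<Rightarrow> complex) \<Rightarrow> nat \<Rightarrow> complex"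
  where "row_mult K y M = (\<lambda>q. \<Sum>p\<in>{1..K}. y p * M p q)"

definition row_normsq :: "nat \<Rightarrow> (nat \<Rightarrow> complex) \<Rightarrow> real"
  where "row_normsq K y = (\<Sum>p\<in>{1..K}. (cmod (y p))\<^sup>2)"

lemma row_mult_mmul: "row_mult K y (mmul K X M) = row_mult K (row_mult K y X) M"
proof
  fix q
  have "row_mult K y (mmul K X M) q = (\<Sum>p\<in>{1..K}. \<Sum>l\<in>{1..K}. y p * X p l * M l q)"
    unfolding row_mult_def mmul_def sum_distrib_left by (simp add: mult_ac)
  also have "\<dots> = (\<Sum>l\<in>{1..K}. \<Sum>p\<in>{1..K}. y p * X p l * M l q)"
    by (rule sum.swap)
  finally show "row_mult K y (mmul K X M) q = row_mult K (row_mult K y X) M q"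
    unfolding row_mult_def sum_distrib_right by simp
qed

lemma row_mult_midentity: "q \<in> {1..K} \<Longrightarrow> row_mult K y (midentity K) q = y q"
  unfolding row_mult_def midentity_def by (simp add: if_distrib cong: if_cong)

lemma row_normsq_row_mult_midentity: "row_normsq K (row_mult K y (midentity K)) = row_normsq K y"
  unfolding row_normsq_def by (intro sum.cong) (auto simp: row_mult_midentity)

lemma finite_lists_length: "finite {v::'a::finite list. length v = m}"
  using finite_lists_length_eq[of "UNIV :: 'a set" m] by simp

lemma sum_lists_length_Suc:
  "(\<Sum>v\<in>{v::'a::finite list. length v = Suc m}. f v) = (\<Sum>j\<in>UNIV. \<Sum>v\<in>{v. length v = m}. f (j # v))"
proof -
  have "{v::'a list. length v = Suc m} = (\<lambda>(j, v). j # v) ` (UNIV \<times> {v. length v = m})"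
    by (auto simp: length_Suc_conv image_iff)
  moreover have "inj_on (\<lambda>(j, v). j # v) (UNIV \<times> {v::'a list. length v = m})"
    by (auto simp: inj_on_def)
  ultimately show ?thesis
    by (simp add: sum.reindex sum.cartesian_product split_def)
qed

lemma sum_words_row_normsq_le:
  fixes M :: "'n::finite \<Rightarrow> nat \<Rightarrow> nat \<Rightarrow> complex"
  assumes row: "\<And>y. (\<Sum>j\<in>UNIV. row_normsq K (row_mult K y (M j))) \<le> \<rho>\<^sup>2 * row_normsq K y"
    and "\<rho> \<ge> 0"
  shows "(\<Sum>v\<in>{v::'n list. length v = m}.
            row_normsq K (row_mult K y (foldr (\<lambda>j X. mmul K (M j) X) v (midentity K))))
          \<le> \<rho> ^ (2 * m) * row_normsq K y"
proof (induction m arbitrary: y)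
  case 0
  have "{v::'n list. length v = 0} = {[]}" by auto
  then show ?case by (simp add: row_normsq_row_mult_midentity)
next
  case (Suc m)
  let ?W = "\<lambda>v. foldr (\<lambda>j X. mmul K (M j) X) v (midentity K)"
  have "(\<Sum>v\<in>{v::'n list. length v = Suc m}. row_normsq K (row_mult K y (?W v)))
      = (\<Sum>j\<in>UNIV. \<Sum>v\<in>{v. length v = m}. row_normsq K (row_mult K (row_mult K y (M j)) (?W v)))"
    unfolding sum_lists_length_Suc by (simp add: row_mult_mmul)
  also have "\<dots> \<le> (\<Sum>j\<in>UNIV. \<rho> ^ (2 * m) * row_normsq K (row_mult K y (M j)))"
    by (intro sum_mono Suc.IH)
  also have "\<dots> \<le> \<rho> ^ (2 * m) * (\<rho>\<^sup>2 * row_normsq K y)"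
    using row assms(2) by (simp add: sum_distrib_left[symmetric] mult_left_mono)
  finally show ?case
    by (simp add: power_add power2_eq_square mult_ac)
qed

lemma entry_sum_words_le:
  fixes M :: "'n::finite \<Rightarrow> nat \<Rightarrow> nat \<Rightarrow> complex"
  assumes row: "\<And>y. (\<Sum>j\<in>UNIV. row_normsq K (row_mult K y (M j))) \<le> \<rho>\<^sup>2 * row_normsq K y"
    and "\<rho> \<ge> 0" and q: "q \<in> {1..K}"
  shows "(\<Sum>v\<in>{v::'n list. length v = m}.
            (cmod (foldr (\<lambda>j X. mmul K (M j) X) v (midentity K) 1 q))\<^sup>2) \<le> \<rho> ^ (2 * m)"
proof -
  define e\<^sub>1 :: "nat \<Rightarrow> complex" where "e\<^sub>1 = (\<lambda>p. if p = 1 then 1 else 0)"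
  have K: "1 \<in> {1..K}" using q by auto
  let ?W = "\<lambda>v. foldr (\<lambda>j X. mmul K (M j) X) v (midentity K)"
  have "row_mult K e\<^sub>1 X q' = X 1 q'" for X q'
  proof -
    have "row_mult K e\<^sub>1 X q' = (\<Sum>p\<in>{1..K}. if p = 1 then X 1 q' else 0)"
      unfolding row_mult_def e\<^sub>1_def by (intro sum.cong) auto
    then show ?thesis using K by simp
  qed
  then have "(cmod (?W v 1 q))\<^sup>2 \<le> row_normsq K (row_mult K e\<^sub>1 (?W v))" for v
    unfolding row_normsq_def using member_le_sum[OF q, of "\<lambda>q. (cmod (row_mult K e\<^sub>1 (?W v) q))\<^sup>2"]
    by simp
  then have "(\<Sum>v\<in>{v::'n list. length v = m}. (cmod (?W v 1 q))\<^sup>2)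
      \<le> (\<Sum>v\<in>{v::'n list. length v = m}. row_normsq K (row_mult K e\<^sub>1 (?W v)))"
    by (intro sum_mono)
  also have "\<dots> \<le> \<rho> ^ (2 * m) * row_normsq K e\<^sub>1"
    by (rule sum_words_row_normsq_le[OF row assms(2)])
  also have "row_normsq K e\<^sub>1 = 1"
  proof -
    have "row_normsq K e\<^sub>1 = (\<Sum>p\<in>{1..K}. if p = 1 then 1 else 0)"
      unfolding row_normsq_def e\<^sub>1_def by (intro sum.cong) auto
    then show ?thesis using K by simp
  qed
  finally show ?thesis by simp
qed

lemma norm_vec_power2: "(norm (x::complex^'n))\<^sup>2 = (\<Sum>j\<in>UNIV. (cmod (x $ j))\<^sup>2)"
  by (simp add: norm_vec_def L2_set_def sum_nonneg)

lemma row_mult_bidiag: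
  assumes q: "q \<in> {1..length w + 1}"
  shows "row_mult (length w + 1) y (bidiag Y w 1 b j) q =
    y q * Y q $ j + b * (if 2 \<le> q \<and> w ! (q - 2) = j then y (q - 1) else 0)"
proof -
  let ?U = "b * (if 2 \<le> q \<and> w ! (q - 2) = j then y (q - 1) else 0)"
  have "y p * bidiag Y w 1 b j p q = (if p = q then y q * Y q $ j else 0) + (if p = q - 1 then ?U else 0)"
    if p: "p \<in> {1..length w + 1}" for p
  proof (cases "p = q")
    case True
    then show ?thesis using p q by (auto simp: bidiag_def)
  next
    case False
    show ?thesis
    proof (cases "p = q - 1")
      case True
      then have q': "q = p + 1" using p False by auto
      then have "p \<le> length w" using q by simp
      then show ?thesis unfolding q' using p by (auto simp: bidiag_def algebra_simps)
    next
      case False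
      then have "q \<noteq> p + 1" by auto
      then show ?thesis using \<open>p \<noteq> q\<close> False by (auto simp: bidiag_def)
    qed
  qed
  then have "row_mult (length w + 1) y (bidiag Y w 1 b j) q =
      (\<Sum>p\<in>{1..length w + 1}. if p = q then y q * Y q $ j else 0) +
      (\<Sum>p\<in>{1..length w + 1}. if p = q - 1 then ?U else 0)"
    unfolding row_mult_def sum.distrib[symmetric] by (intro sum.cong) auto
  then show ?thesis
    using q by (cases "2 \<le> q") auto
qed

lemma cmod_add_power2_le:
  fixes x y :: complex
  assumes "\<mu> > 0" "b \<ge> 0"
  shows "(cmod (x + of_real b * y))\<^sup>2 \<le> (1 + b / \<mu>) * (cmod x)\<^sup>2 + b * (b + \<mu>) * (cmod y)\<^sup>2"
proof -
  have "(cmod (x + of_real b * y))\<^sup>2 \<le> (cmod x + b * cmod y)\<^sup>2"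
    using norm_triangle_ineq[of x "of_real b * y"] assms by (intro power_mono) (auto simp: norm_mult)
  moreover have "2 * cmod x * cmod y \<le> (cmod x)\<^sup>2 / \<mu> + \<mu> * (cmod y)\<^sup>2"
  proof -
    have "0 \<le> (cmod x - \<mu> * cmod y)\<^sup>2" by simp
    then show ?thesis
      using assms by (simp add: field_simps power2_eq_square)
  qed
  then have "b * (2 * cmod x * cmod y) \<le> b * ((cmod x)\<^sup>2 / \<mu> + \<mu> * (cmod y)\<^sup>2)"
    using assms by (intro mult_left_mono) auto
  ultimately show ?thesis
    by (simp add: power2_eq_square algebra_simps add_divide_distrib)
qed

lemma sum_shift_down:
  "(\<Sum>q\<in>{1..K + 1}. if 2 \<le> q then f (q - 1) else (0::real)) = (\<Sum>q\<in>{1..K::nat}. f q)"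
  by (induction K) simp_all

lemma sum_diagonal_part_le:
  fixes Y :: "nat \<Rightarrow> complex^'n::finite"
  assumes Y: "\<forall>p\<in>{1..K}. norm (Y p) \<le> \<mu>"
  shows "(\<Sum>q\<in>{1..K}. \<Sum>j\<in>UNIV. (cmod (y q * Y q $ j))\<^sup>2) \<le> \<mu>\<^sup>2 * row_normsq K y"
proof -
  have "(\<Sum>j\<in>UNIV. (cmod (y q * Y q $ j))\<^sup>2) = (cmod (y q))\<^sup>2 * (norm (Y q))\<^sup>2" for q
    unfolding norm_vec_power2 by (simp add: norm_mult power_mult_distrib sum_distrib_left)
  moreover have "(cmod (y q))\<^sup>2 * (norm (Y q))\<^sup>2 \<le> \<mu>\<^sup>2 * (cmod (y q))\<^sup>2" if "q \<in> {1..K}" for q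
  proof -
    have "(norm (Y q))\<^sup>2 \<le> \<mu>\<^sup>2" using Y that by (intro power_mono) auto
    from mult_left_mono[OF this, of "(cmod (y q))\<^sup>2"] show ?thesis by (simp add: mult.commute)
  qed
  ultimately show ?thesis
    unfolding row_normsq_def sum_distrib_left by (intro sum_mono) auto
qed

lemma sum_superdiagonal_part_le:
  fixes w :: "'n::finite list"
  shows "(\<Sum>q\<in>{1..length w + 1}. \<Sum>j\<in>UNIV.
      (cmod (if 2 \<le> q \<and> w ! (q - 2) = j then y (q - 1) else 0))\<^sup>2) \<le> row_normsq (length w + 1) y"
proof -
  have U: "(\<Sum>j\<in>UNIV. (cmod (if 2 \<le> q \<and> w ! (q - 2) = j then y (q - 1) else 0))\<^sup>2) =
      (if 2 \<le> q then (cmod (y (q - 1)))\<^sup>2 else 0)" for q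
  proof (cases "2 \<le> q")
    case True
    then have "(\<Sum>j\<in>UNIV. (cmod (if 2 \<le> q \<and> w ! (q - 2) = j then y (q - 1) else 0))\<^sup>2) =
        (\<Sum>j\<in>UNIV. if j = w ! (q - 2) then (cmod (y (q - 1)))\<^sup>2 else 0)"
      by (intro sum.cong) auto
    then show ?thesis using True by simp
  qed simp
  have "(\<Sum>q\<in>{1..length w + 1}. \<Sum>j\<in>UNIV.
      (cmod (if 2 \<le> q \<and> w ! (q - 2) = j then y (q - 1) else 0))\<^sup>2) = (\<Sum>q\<in>{1..length w}. (cmod (y q))\<^sup>2)"
    using sum_shift_down[where K="length w" and f="\<lambda>q. (cmod (y q))\<^sup>2"] by (simp only: U)
  also have "\<dots> \<le> row_normsq (length w + 1) y"
    unfolding row_normsq_def by (intro sum_mono2) auto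
  finally show ?thesis .
qed

text \<open>The diagonal part contributes at most \<open>\<mu>\<close> and the superdiagonal part at most \<open>b\<close>; the
  weighted Young inequality above recombines them to \<open>\<mu> + b\<close>.\<close>

lemma bidiag_row_normsq_le:
  assumes b: "b \<ge> 0" and \<mu>: "\<mu> > 0" and Y: "\<forall>p\<in>{1..length w + 1}. norm (Y p) \<le> \<mu>"
  shows "(\<Sum>j\<in>UNIV. row_normsq (length w + 1) (row_mult (length w + 1) y (bidiag Y w 1 (of_real b) j)))
         \<le> (\<mu> + b)\<^sup>2 * row_normsq (length w + 1) y"
proof -
  let ?K = "length w + 1"
  define D where "D j q = y q * Y q $ j" for j q
  define U where "U j q = (if 2 \<le> q \<and> w ! (q - 2) = j then y (q - 1) else 0)" for j q
  have "(\<Sum>j\<in>UNIV. row_normsq ?K (row_mult ?K y (bidiag Y w 1 (of_real b) j)))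
      = (\<Sum>j\<in>UNIV. \<Sum>q\<in>{1..?K}. (cmod (D j q + of_real b * U j q))\<^sup>2)"
    unfolding row_normsq_def D_def U_def by (intro sum.cong refl) (simp only: row_mult_bidiag)
  also have "\<dots> \<le> (\<Sum>j\<in>UNIV. \<Sum>q\<in>{1..?K}.
      (1 + b / \<mu>) * (cmod (D j q))\<^sup>2 + b * (b + \<mu>) * (cmod (U j q))\<^sup>2)"
    by (intro sum_mono cmod_add_power2_le \<mu> b)
  also have "\<dots> = (1 + b / \<mu>) * (\<Sum>q\<in>{1..?K}. \<Sum>j\<in>UNIV. (cmod (D j q))\<^sup>2)
      + b * (b + \<mu>) * (\<Sum>q\<in>{1..?K}. \<Sum>j\<in>UNIV. (cmod (U j q))\<^sup>2)"
    by (subst sum.swap) (simp only: sum.distrib sum_distrib_left)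
  also have "\<dots> \<le> (1 + b / \<mu>) * (\<mu>\<^sup>2 * row_normsq ?K y) + b * (b + \<mu>) * row_normsq ?K y"
    using sum_diagonal_part_le[OF Y, of y] sum_superdiagonal_part_le[of w y] \<mu> b
    unfolding D_def U_def by (intro add_mono mult_left_mono) auto
  also have "\<dots> = (\<mu> + b)\<^sup>2 * row_normsq ?K y"
    using \<mu> by (simp add: field_simps power2_eq_square)
  finally show ?thesis .
qed

lemma bidiag_word_entry_sum_le:
  fixes Y :: "nat \<Rightarrow> complex^'n::finite"
  assumes "b \<ge> 0" "\<mu> > 0" "\<forall>p\<in>{1..length w + 1}. norm (Y p) \<le> \<mu>" "q \<in> {1..length w + 1}"
  shows "(\<Sum>v\<in>{v::'n list. length v = m}. (cmod (bidiag_word Y w 1 (of_real b) v 1 q))\<^sup>2)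
    \<le> (\<mu> + b) ^ (2 * m)"
  unfolding bidiag_word_def
  by (rule entry_sum_words_le[OF bidiag_row_normsq_le[OF assms(1-3)] _ assms(4)]) (use assms in auto)

section \<open>Fock space and the disc algebra\<close>

lemma fnorm_nonneg: "fnorm x \<ge> 0"
  unfolding fnorm_def by (intro real_sqrt_ge_zero infsum_nonneg) auto

lemma fnorm_power2: "(fnorm x)\<^sup>2 = infsum (\<lambda>w. (cmod (x w))\<^sup>2) UNIV"
  unfolding fnorm_def by (simp add: infsum_nonneg)

lemma sum_le_fnorm_power2:
  assumes "fock_vec x" "finite S"
  shows "(\<Sum>v\<in>S. (cmod (x v))\<^sup>2) \<le> (fnorm x)\<^sup>2"
  unfolding fnorm_power2 using assms unfolding fock_vec_def
  by (intro finite_sum_le_infsum) auto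

lemma norm_le_fnorm:
  assumes "fock_vec x"
  shows "cmod (x v) \<le> fnorm x"
proof -
  have "(cmod (x v))\<^sup>2 \<le> (fnorm x)\<^sup>2"
    using sum_le_fnorm_power2[OF assms, of "{v}"] by simp
  then show ?thesis
    using fnorm_nonneg[of x] by (simp add: power_mono_iff abs_le_square_iff)
qed

lemma fock_vec_diff:
  assumes "fock_vec x" "fock_vec y"
  shows "fock_vec (\<lambda>v. x v - y v)"
  unfolding fock_vec_def
proof (rule summable_on_comparison_test)
  show "(\<lambda>v. 2 * (cmod (x v))\<^sup>2 + 2 * (cmod (y v))\<^sup>2) summable_on UNIV"
    using assms unfolding fock_vec_def by (intro summable_on_add summable_on_cmult_right)
  fix v
  have "(cmod (x v - y v))\<^sup>2 \<le> (cmod (x v) + cmod (y v))\<^sup>2"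
    using norm_triangle_ineq4[of "x v" "y v"] by (intro power_mono) auto
  also have "\<dots> \<le> 2 * (cmod (x v))\<^sup>2 + 2 * (cmod (y v))\<^sup>2"
    using zero_le_power2[of "cmod (x v) - cmod (y v)"] unfolding power2_sum power2_diff by linarith
  finally show "(cmod (x v - y v))\<^sup>2 \<le> 2 * (cmod (x v))\<^sup>2 + 2 * (cmod (y v))\<^sup>2" .
qed simp

lemma fock_vec_add:
  assumes "fock_vec x" "fock_vec y"
  shows "fock_vec (\<lambda>v. x v + y v)"
proof -
  have "fock_vec (\<lambda>v. - y v)" using assms(2) unfolding fock_vec_def by simp
  from fock_vec_diff[OF assms(1) this] show ?thesis by simp
qed

lemma ncpoly_imp_fock_vec:
  assumes "ncpoly c"
  shows "fock_vec c"
proof -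
  have "(\<lambda>w. (cmod (c w))\<^sup>2) summable_on {v. c v \<noteq> 0}"
    using assms unfolding ncpoly_def by simp
  moreover have "((\<lambda>w. (cmod (c w))\<^sup>2) summable_on {v. c v \<noteq> 0}) \<longleftrightarrow>
      ((\<lambda>w. (cmod (c w))\<^sup>2) summable_on UNIV)"
    by (rule summable_on_cong_neutral) auto
  ultimately show ?thesis unfolding fock_vec_def by simp
qed

definition vacuum :: "'n list \<Rightarrow> complex"
  where "vacuum = (\<lambda>v. if v = [] then 1 else 0)"

lemma ncpoly_vacuum: "ncpoly (vacuum :: 'n list \<Rightarrow> complex)"
proof -
  have "{v::'n list. vacuum v \<noteq> 0} = {[]}" by (auto simp: vacuum_def)
  then show ?thesis unfolding ncpoly_def by simp
qed

lemma fock_vec_vacuum: "fock_vec vacuum"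
  by (rule ncpoly_imp_fock_vec[OF ncpoly_vacuum])

lemma fnorm_vacuum: "fnorm (vacuum :: 'n list \<Rightarrow> complex) = 1"
proof -
  have "infsum (\<lambda>w::'n list. (cmod (vacuum w))\<^sup>2) UNIV = infsum (\<lambda>w. (cmod (vacuum w))\<^sup>2) {[]::'n list}"
    by (rule infsum_cong_neutral) (auto simp: vacuum_def)
  then show ?thesis unfolding fnorm_def by (simp add: vacuum_def)
qed

lemma polyop_vacuum: "polyop c vacuum = c"
proof
  fix w
  have "polyop c vacuum w = (\<Sum>i\<le>length w. if i = length w then c w else 0)"
    unfolding polyop_def vacuum_def by (intro sum.cong) auto
  then show "polyop c vacuum w = c w" by simp
qed

lemma polyop_add: "polyop (\<lambda>u. c\<^sub>1 u + c\<^sub>2 u) f = (\<lambda>w. polyop c\<^sub>1 f w + polyop c\<^sub>2 f w)"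
  unfolding polyop_def by (simp add: sum.distrib distrib_right)

lemma polyop_monomial:
  "polyop (\<lambda>u. if u = v then a else 0) f =
    (\<lambda>w. if take (length v) w = v then a * f (drop (length v) w) else 0)"
proof
  fix w :: "'a list"
  have "(if take i w = v then a else 0) * f (drop i w) =
      (if i = length v \<and> take (length v) w = v then a * f (drop (length v) w) else 0)"
    if "i \<le> length w" for i
    using that by auto
  then have "polyop (\<lambda>u. if u = v then a else 0) f w =
      (\<Sum>i\<le>length w. if i = length v \<and> take (length v) w = v then a * f (drop (length v) w) else 0)"
    unfolding polyop_def by (intro sum.cong) auto
  also have "\<dots> = (if take (length v) w = v then a * f (drop (length v) w) else 0)"
    by (cases "length v \<le> length w") auto
  finally show "polyop (\<lambda>u. if u = v then a else 0) f w =
      (if take (length v) w = v then a * f (drop (length v) w) else 0)" .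
qed

lemma fock_vec_monomial_shift:
  assumes f: "fock_vec f"
  shows "fock_vec (\<lambda>w. if take (length v) w = v then a * f (drop (length v) w) else 0)"
proof -
  let ?g = "\<lambda>w. (cmod (if take (length v) w = v then a * f (drop (length v) w) else 0))\<^sup>2"
  have "?g \<circ> (\<lambda>u. v @ u) = (\<lambda>u. (cmod a)\<^sup>2 * (cmod (f u))\<^sup>2)"
    by (auto simp: norm_mult power_mult_distrib)
  then have "(?g \<circ> (\<lambda>u. v @ u)) summable_on UNIV"
    using summable_on_cmult_right[OF f[unfolded fock_vec_def]] by simp
  then have "?g summable_on range (\<lambda>u. v @ u)"
    by (subst summable_on_reindex) (auto simp: inj_def)
  moreover have "(?g summable_on range (\<lambda>u. v @ u)) \<longleftrightarrow> (?g summable_on UNIV)"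
  proof (rule summable_on_cong_neutral)
    fix x assume "x \<in> UNIV - range (\<lambda>u. v @ u)"
    then have "take (length v) x \<noteq> v" by (metis DiffD2 append_take_drop_id rangeI)
    then show "?g x = 0" by simp
  qed auto
  ultimately show ?thesis unfolding fock_vec_def by simp
qed

lemma fock_vec_polyop:
  assumes f: "fock_vec f" and c: "ncpoly c"
  shows "fock_vec (polyop c f)"
proof -
  have "{v. c v \<noteq> 0} \<subseteq> S \<Longrightarrow> fock_vec (polyop c f)" if "finite S" for S c
    using that
  proof (induction S arbitrary: c rule: finite_induct)
    case empty
    then have "polyop c f = (\<lambda>w. 0)" unfolding polyop_def by (auto intro!: ext sum.neutral)
    then show ?case unfolding fock_vec_def by simp
  next
    case (insert v S)
    have split: "c = (\<lambda>u. (c(v := 0)) u + (if u = v then c v else 0))" by auto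
    have "polyop c f =
        (\<lambda>w. polyop (c(v := 0)) f w + polyop (\<lambda>u. if u = v then c v else 0) f w)"
      by (subst split) (rule polyop_add)
    moreover have "fock_vec (polyop (c(v := 0)) f)"
      using insert by (intro insert.IH) auto
    moreover have "fock_vec (polyop (\<lambda>u. if u = v then c v else 0) f)"
      unfolding polyop_monomial by (rule fock_vec_monomial_shift[OF f])
    ultimately show ?case by (simp add: fock_vec_add)
  qed
  then show ?thesis using c unfolding ncpoly_def by blast
qed

lemma approx_seq_exists:
  assumes "disc_alg A"
  shows "\<exists>cs. approx_seq A cs"
proof -
  have "\<forall>m::nat. \<exists>c. ncpoly c \<and>
      (\<forall>f. fock_vec f \<longrightarrow> fnorm (A f - polyop c f) \<le> 1 / (real m + 1) * fnorm f)"
  proof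
    fix m :: nat
    have "1 / (real m + 1) > 0" by simp
    then show "\<exists>c. ncpoly c \<and>
        (\<forall>f. fock_vec f \<longrightarrow> fnorm (A f - polyop c f) \<le> 1 / (real m + 1) * fnorm f)"
      using assms unfolding disc_alg_def by blast
  qed
  then obtain cs where cs: "\<forall>m. ncpoly (cs m) \<and>
      (\<forall>f. fock_vec f \<longrightarrow> fnorm (A f - polyop (cs m) f) \<le> 1 / (real m + 1) * fnorm f)"
    using choice[of "\<lambda>m c. ncpoly c \<and> (\<forall>f. fock_vec f \<longrightarrow>
      fnorm (A f - polyop c f) \<le> 1 / (real m + 1) * fnorm f)"] by blast
  have "\<exists>M. \<forall>m\<ge>M. \<forall>f. fock_vec f \<longrightarrow> fnorm (A f - polyop (cs m) f) \<le> \<epsilon> * fnorm f"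
    if "\<epsilon> > 0" for \<epsilon>
  proof -
    obtain M :: nat where M: "1 / \<epsilon> < real M" using reals_Archimedean2 by blast
    have "fnorm (A f - polyop (cs m) f) \<le> \<epsilon> * fnorm f" if "m \<ge> M" "fock_vec f" for m f
    proof -
      have "1 / \<epsilon> < real m + 1" using M that by linarith
      then have "1 / (real m + 1) \<le> \<epsilon>" using \<open>\<epsilon> > 0\<close> by (simp add: field_simps)
      then have "1 / (real m + 1) * fnorm f \<le> \<epsilon> * fnorm f"
        by (intro mult_right_mono fnorm_nonneg)
      then show ?thesis using cs that(2) by (meson order_trans)
    qed
    then show ?thesis by blast
  qed
  then show ?thesis using cs unfolding approx_seq_def by blast
qed

lemma approx_seq_uniform:
  assumes "approx_seq A cs" "\<epsilon> > 0"
  obtains M where "\<And>m f. m \<ge> M \<Longrightarrow> fock_vec f \<Longrightarrow> fnorm (A f - polyop (cs m) f) \<le> \<epsilon> * fnorm f"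
proof -
  have "\<forall>\<epsilon>>0. \<exists>M. \<forall>m\<ge>M. \<forall>f. fock_vec f \<longrightarrow> fnorm (A f - polyop (cs m) f) \<le> \<epsilon> * fnorm f"
    using assms(1) unfolding approx_seq_def by (rule conjunct2)
  with assms(2) show ?thesis using that by blast
qed

lemma approx_seq_vacuum_close:
  fixes A :: "('n list \<Rightarrow> complex) \<Rightarrow> ('n list \<Rightarrow> complex)"
  assumes "approx_seq A cs" "\<epsilon> > 0"
  obtains M where "\<And>k. k \<ge> M \<Longrightarrow> fnorm (\<lambda>v. A vacuum v - cs k v) \<le> \<epsilon>"
proof -
  obtain M where M: "\<And>m f. m \<ge> M \<Longrightarrow> fock_vec f \<Longrightarrow> fnorm (A f - polyop (cs m) f) \<le> \<epsilon> * fnorm f"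
    using approx_seq_uniform[OF assms] by blast
  have "fnorm (\<lambda>v. A vacuum v - cs k v) \<le> \<epsilon>" if "k \<ge> M" for k
  proof -
    have "A vacuum - polyop (cs k) vacuum = (\<lambda>v. A vacuum v - cs k v)"
      by (simp add: polyop_vacuum fun_diff_def)
    then show ?thesis
      using M[OF that fock_vec_vacuum] by (simp add: fnorm_vacuum)
  qed
  then show ?thesis using that by blast
qed

lemma approx_seq_polyop_tendsto:
  assumes A: "disc_alg A" and cs: "approx_seq A cs" and f: "fock_vec f"
  shows "(\<lambda>k. polyop (cs k) f w) \<longlonglongrightarrow> A f w"
proof (rule LIMSEQ_I)
  fix r :: real assume r: "r > 0"
  then have "r / (2 * (fnorm f + 1)) > 0" using fnorm_nonneg[of f] by simp
  then obtain M where M: "\<And>k. k \<ge> M \<Longrightarrow>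
      fnorm (A f - polyop (cs k) f) \<le> r / (2 * (fnorm f + 1)) * fnorm f"
    using approx_seq_uniform[OF cs] f by metis
  have "norm (polyop (cs k) f w - A f w) < r" if "k \<ge> M" for k
  proof -
    have "fock_vec (A f - polyop (cs k) f)"
      using fock_vec_diff[OF _ fock_vec_polyop[OF f]] A f cs
      unfolding disc_alg_def approx_seq_def fun_diff_def by blast
    then have "norm (polyop (cs k) f w - A f w) \<le> fnorm (A f - polyop (cs k) f)"
      using norm_le_fnorm[of "A f - polyop (cs k) f" w] by (simp add: norm_minus_commute)
    also have "\<dots> \<le> r / 2 * (fnorm f / (fnorm f + 1))"
      using M[OF that] by simp
    also have "\<dots> \<le> r / 2"
    proof -
      have "fnorm f / (fnorm f + 1) \<le> 1" using fnorm_nonneg[of f] by simp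
      then have "r / 2 * (fnorm f / (fnorm f + 1)) \<le> r / 2 * 1"
        using r by (intro mult_left_mono) auto
      then show ?thesis by simp
    qed
    finally show ?thesis using r by simp
  qed
  then show "\<exists>M. \<forall>k\<ge>M. norm (polyop (cs k) f w - A f w) < r" by blast
qed

lemma disc_alg_apply_eq:
  assumes A: "disc_alg A" and f: "fock_vec f"
  shows "A f w = (\<Sum>i\<le>length w. A vacuum (take i w) * f (drop i w))"
proof -
  obtain cs where cs: "approx_seq A cs" using approx_seq_exists[OF A] by blast
  have "(\<lambda>k. cs k u) \<longlonglongrightarrow> A vacuum u" for u
    using approx_seq_polyop_tendsto[OF A cs fock_vec_vacuum] by (simp add: polyop_vacuum)
  then have "(\<lambda>k. polyop (cs k) f w) \<longlonglongrightarrow> (\<Sum>i\<le>length w. A vacuum (take i w) * f (drop i w))"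
    unfolding polyop_def by (intro tendsto_intros)
  with approx_seq_polyop_tendsto[OF A cs f] show ?thesis
    by (rule LIMSEQ_unique)
qed

lemma disc_alg_symbol_nonzero:
  assumes "disc_alg A" "fock_vec f" "A f w \<noteq> 0"
  shows "\<exists>u. A vacuum u \<noteq> 0"
proof (rule ccontr)
  assume "\<nexists>u. A vacuum u \<noteq> 0"
  then show False using disc_alg_apply_eq[OF assms(1,2), of w] assms(3) by simp
qed

section \<open>Pairing a Fock vector with a family of matrix entries\<close>

definition graded_term :: "('n list \<Rightarrow> complex) \<Rightarrow> ('n list \<Rightarrow> complex) \<Rightarrow> nat \<Rightarrow> complex"
  where "graded_term e x m = (\<Sum>v\<in>{v. length v = m}. x v * e v)"

definition graded_pairing :: "('n list \<Rightarrow> complex) \<Rightarrow> ('n list \<Rightarrow> complex) \<Rightarrow> complex"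
  where "graded_pairing e x = (\<Sum>m. graded_term e x m)"

lemma norm_graded_term_le:
  fixes x e :: "'n::finite list \<Rightarrow> complex"
  assumes x: "fock_vec x" and e: "(\<Sum>v\<in>{v. length v = m}. (cmod (e v))\<^sup>2) \<le> \<rho> ^ (2 * m)"
    and \<rho>: "\<rho> \<ge> 0"
  shows "norm (graded_term e x m) \<le> fnorm x * \<rho> ^ m"
proof -
  let ?S = "{v::'n list. length v = m}"
  have "norm (graded_term e x m) \<le> (\<Sum>v\<in>?S. \<bar>cmod (x v)\<bar> * \<bar>cmod (e v)\<bar>)"
    unfolding graded_term_def by (rule order_trans[OF norm_sum]) (simp add: norm_mult)
  also have "\<dots> \<le> L2_set (\<lambda>v. cmod (x v)) ?S * L2_set (\<lambda>v. cmod (e v)) ?S"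
    by (rule L2_set_mult_ineq)
  also have "\<dots> \<le> fnorm x * \<rho> ^ m"
  proof (intro mult_mono)
    have "L2_set (\<lambda>v. cmod (x v)) ?S \<le> sqrt ((fnorm x)\<^sup>2)"
      unfolding L2_set_def using sum_le_fnorm_power2[OF x finite_lists_length]
      by (intro real_sqrt_le_mono) simp
    then show "L2_set (\<lambda>v. cmod (x v)) ?S \<le> fnorm x"
      using fnorm_nonneg[of x] by simp
    have "L2_set (\<lambda>v. cmod (e v)) ?S \<le> sqrt ((\<rho> ^ m)\<^sup>2)"
      unfolding L2_set_def using e by (intro real_sqrt_le_mono) (simp add: power_mult[symmetric] mult.commute)
    then show "L2_set (\<lambda>v. cmod (e v)) ?S \<le> \<rho> ^ m"
      using \<rho> by simp
  qed (use \<rho> fnorm_nonneg in auto)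
  finally show ?thesis .
qed

locale graded_decay =
  fixes e :: "'n::finite list \<Rightarrow> complex" and \<rho> :: real
  assumes sum_entries_le: "\<And>m. (\<Sum>v\<in>{v. length v = m}. (cmod (e v))\<^sup>2) \<le> \<rho> ^ (2 * m)"
    and nonneg: "0 \<le> \<rho>" and less_one: "\<rho> < 1"
begin

lemma summable_geometric_bound: "summable (\<lambda>m. c * \<rho> ^ m)"
  using nonneg less_one by (intro summable_mult summable_geometric) simp

lemma summable_graded_term:
  assumes "fock_vec x"
  shows "summable (\<lambda>m. norm (graded_term e x m))"
  by (rule summable_comparison_test'[OF summable_geometric_bound])
    (use norm_graded_term_le[OF assms sum_entries_le nonneg] in simp)

lemma norm_graded_pairing_le:
  assumes "fock_vec x"
  shows "norm (graded_pairing e x) \<le> fnorm x / (1 - \<rho>)"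
proof -
  have "norm (graded_pairing e x) \<le> (\<Sum>m. norm (graded_term e x m))"
    unfolding graded_pairing_def by (rule summable_norm[OF summable_graded_term[OF assms]])
  also have "\<dots> \<le> (\<Sum>m. fnorm x * \<rho> ^ m)"
    by (rule suminf_le[OF _ summable_graded_term[OF assms] summable_geometric_bound])
      (rule norm_graded_term_le[OF assms sum_entries_le nonneg])
  also have "\<dots> = fnorm x / (1 - \<rho>)"
    using nonneg less_one by (simp add: suminf_mult summable_geometric suminf_geometric)
  finally show ?thesis .
qed

lemma graded_pairing_diff:
  assumes "fock_vec x" "fock_vec y"
  shows "graded_pairing e (\<lambda>v. x v - y v) = graded_pairing e x - graded_pairing e y"
proof -
  have "graded_term e (\<lambda>v. x v - y v) = (\<lambda>m. graded_term e x m - graded_term e y m)"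
    unfolding graded_term_def by (simp add: sum_subtractf algebra_simps)
  then show ?thesis
    unfolding graded_pairing_def
    using summable_norm_cancel[OF summable_graded_term[OF assms(1)]]
      summable_norm_cancel[OF summable_graded_term[OF assms(2)]]
    by (simp add: suminf_diff)
qed

end

lemma graded_pairing_ncpoly:
  fixes c e :: "'n::finite list \<Rightarrow> complex"
  assumes "ncpoly c"
  shows "graded_pairing e c = (\<Sum>v\<in>{v. c v \<noteq> 0}. c v * e v)"
proof -
  let ?S = "{v. c v \<noteq> 0}"
  have S: "finite ?S" using assms unfolding ncpoly_def .
  have "graded_pairing e c = (\<Sum>m\<in>length ` ?S. graded_term e c m)"
    unfolding graded_pairing_def graded_term_def
    by (rule suminf_finite) (use S in \<open>auto intro!: sum.neutral\<close>)
  also have "\<dots> = (\<Sum>m\<in>length ` ?S. \<Sum>v\<in>{v\<in>?S. length v = m}. c v * e v)"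
    unfolding graded_term_def using finite_lists_length
    by (intro sum.cong refl sum.mono_neutral_right) auto
  also have "\<dots> = (\<Sum>v\<in>?S. c v * e v)"
    by (rule sum.image_gen[symmetric]) (rule S)
  finally show ?thesis .
qed

lemma (in graded_decay) graded_pairing_limit:
  assumes A: "disc_alg A" and cs: "approx_seq A cs"
  shows "(\<lambda>k. \<Sum>v\<in>{v. cs k v \<noteq> 0}. cs k v * e v) \<longlonglongrightarrow> graded_pairing e (A vacuum)"
proof (rule LIMSEQ_I)
  fix r :: real assume r: "r > 0"
  have F: "fock_vec (A vacuum)" using A fock_vec_vacuum unfolding disc_alg_def by blast
  have c: "ncpoly (cs k)" for k
    using cs unfolding approx_seq_def by blast
  obtain M where M: "\<And>k. k \<ge> M \<Longrightarrow> fnorm (\<lambda>v. A vacuum v - cs k v) \<le> r * (1 - \<rho>) / 2"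
    using approx_seq_vacuum_close[OF cs, of "r * (1 - \<rho>) / 2"] r less_one by auto
  have "norm ((\<Sum>v\<in>{v. cs k v \<noteq> 0}. cs k v * e v) - graded_pairing e (A vacuum)) < r"
    if k: "k \<ge> M" for k
  proof -
    have "norm ((\<Sum>v\<in>{v. cs k v \<noteq> 0}. cs k v * e v) - graded_pairing e (A vacuum))
        = norm (graded_pairing e (\<lambda>v. A vacuum v - cs k v))"
      using graded_pairing_diff[OF F ncpoly_imp_fock_vec[OF c]]
      by (simp add: graded_pairing_ncpoly[OF c] norm_minus_commute)
    also have "\<dots> \<le> fnorm (\<lambda>v. A vacuum v - cs k v) / (1 - \<rho>)"
      by (rule norm_graded_pairing_le[OF fock_vec_diff[OF F ncpoly_imp_fock_vec[OF c]]])
    also have "\<dots> \<le> r / 2"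
      using M[OF k] less_one by (simp add: field_simps)
    finally show ?thesis using r by simp
  qed
  then show "\<exists>M. \<forall>k\<ge>M. norm ((\<Sum>v\<in>{v. cs k v \<noteq> 0}. cs k v * e v) - graded_pairing e (A vacuum)) < r"
    by blast
qed

lemma summable_power_series_bounded:
  fixes h :: "nat \<Rightarrow> complex"
  assumes h: "\<And>m. norm (h m) \<le> C * r ^ m" and r: "0 < r" and z: "norm z < 1 / r"
  shows "summable (\<lambda>m. h m * z ^ m)"
proof (rule summable_comparison_test')
  have "r * norm z < 1" "0 \<le> r * norm z"
    using z r by (simp_all add: field_simps)
  then show "summable (\<lambda>m. C * (r * norm z) ^ m)"
    by (intro summable_mult summable_geometric) simp
  show "norm (h m * z ^ m) \<le> C * (r * norm z) ^ m" for m
    using mult_right_mono[OF h[of m], of "norm z ^ m"]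
    by (simp add: norm_mult norm_power power_mult_distrib mult.assoc)
qed

text \<open>A power series that does not vanish at \<open>0\<close> has only isolated zeros in its disc of
  convergence, so it is nonzero at real points arbitrarily close to \<open>1\<close>.\<close>

lemma power_series_nonzero_near_one:
  fixes h :: "nat \<Rightarrow> complex"
  assumes h: "\<And>m. norm (h m) \<le> C * r ^ m" and r: "0 < r" "r < 1" and h0: "h 0 \<noteq> 0"
    and \<eta>: "\<eta> > 0"
  obtains t :: real where "0 < t" "t \<le> 1" "1 - t < \<eta>" "(\<Sum>m. h m * of_real t ^ m) \<noteq> 0"
proof -
  define G where "G z = (\<Sum>m. h m * z ^ m)" for z :: complex
  let ?S = "ball (0::complex) (1 / r)"
  have "(\<lambda>m. h m * (z - 0) ^ m) sums G z" if "z \<in> ?S" for z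
    using summable_power_series_bounded[OF h r(1)] that unfolding G_def by (simp add: summable_sums)
  then have G: "G holomorphic_on ?S"
    by (rule power_series_holomorphic)
  have S: "0 \<in> ?S" "1 \<in> ?S"
    using r by (simp_all add: field_simps)
  show ?thesis
  proof (cases "G 1 = 0")
    case False
    then show ?thesis using that[of 1] \<eta> unfolding G_def by simp
  next
    case True
    have "G 0 \<noteq> 0" unfolding G_def using h0 by simp
    then obtain \<epsilon> where \<epsilon>: "0 < \<epsilon>" "ball 1 \<epsilon> \<subseteq> ?S"
      and nonzero: "\<And>z. z \<in> ball 1 \<epsilon> - {1} \<Longrightarrow> G z \<noteq> 0"
      by (rule isolated_zeros[OF G open_ball convex_connected[OF convex_ball] S(2) True S(1)]) blast
    define s where "s = min (min (\<epsilon> / 2) (\<eta> / 2)) (1 / 2)"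
    have s: "0 < s" "s < \<epsilon>" "s < \<eta>" "s \<le> 1 / 2"
      using \<epsilon> \<eta> by (auto simp: s_def)
    then have "complex_of_real (1 - s) \<in> ball 1 \<epsilon> - {1}"
      by (auto simp: dist_norm)
    then show ?thesis
      using that[of "1 - s"] nonzero s unfolding G_def by auto
  qed
qed

lemma exists_injective_coordinates:
  obtains P :: "nat \<Rightarrow> complex^'n::finite" where "\<And>i i' j j'. P i $ j = P i' $ j' \<Longrightarrow> i = i' \<and> j = j'"
proof -
  obtain g :: "'n \<Rightarrow> nat" and n where g: "inj g"
    using finite_imp_inj_to_nat_seg[of "UNIV :: 'n set"] by auto
  define P :: "nat \<Rightarrow> complex^'n" where "P i = (\<chi> j. of_nat i + \<i> * of_nat (g j))" for i
  have "i = i' \<and> j = j'" if "P i $ j = P i' $ j'" for i i' j j'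
  proof -
    have "Re (P i $ j) = Re (P i' $ j')" "Im (P i $ j) = Im (P i' $ j')"
      using that by simp_all
    then show ?thesis using g by (auto simp: P_def inj_def)
  qed
  then show ?thesis by (rule that)
qed

lemma exists_injective_perturbation:
  fixes Z :: "nat \<Rightarrow> complex^'n::finite"
  assumes I: "finite I" and \<eta>: "\<eta> > 0"
  obtains Y where "\<And>i. i \<in> I \<Longrightarrow> norm (Y i - Z i) < \<eta>" "inj_on (\<lambda>(i, j). Y i $ j) (I \<times> UNIV)"
proof -
  obtain P :: "nat \<Rightarrow> complex^'n" where P_inj: "\<And>i i' j j'. P i $ j = P i' $ j' \<Longrightarrow> i = i' \<and> j = j'"
    using exists_injective_coordinates by blast
  define B where "B = Max (insert 1 (norm ` P ` I))"
  have B: "B \<ge> 1" "\<And>i. i \<in> I \<Longrightarrow> norm (P i) \<le> B"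
    unfolding B_def using I by auto
  define D where "D = I \<times> (UNIV :: 'n set)"
  \<comment> \<open>the coordinates of \<open>Z + c P\<close> collide only for the finitely many values of \<open>c\<close> in \<open>bad\<close>\<close>
  define bad where "bad = (\<lambda>((i, j), (i', j')). Re ((Z i' $ j' - Z i $ j) / (P i $ j - P i' $ j'))) ` (D \<times> D)"
  have "finite bad" unfolding bad_def D_def using I by simp
  moreover have "infinite {0<..<\<eta> / B}" using \<eta> B by simp
  ultimately have "{0<..<\<eta> / B} - bad \<noteq> {}"
    using Diff_infinite_finite by (metis finite.emptyI)
  then obtain c where c: "c \<in> {0<..<\<eta> / B}" "c \<notin> bad"
    by blast
  define Y where "Y i = Z i + c *\<^sub>R P i" for i
  have comp: "(c *\<^sub>R x) $ k = of_real c * (x $ k)" for x :: "complex^'n" and k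
    by (simp only: vector_scaleR_component) (simp add: scaleR_conv_of_real)
  have "norm (Y i - Z i) < \<eta>" if "i \<in> I" for i
  proof -
    have "norm (Y i - Z i) = c * norm (P i)" using c by (simp add: Y_def)
    also have "\<dots> \<le> c * B" using c B(2)[OF that] by (intro mult_left_mono) auto
    also have "\<dots> < \<eta>" using c B(1) by (simp add: field_simps)
    finally show ?thesis .
  qed
  moreover have "inj_on (\<lambda>(i, j). Y i $ j) (I \<times> UNIV)"
  proof (rule inj_onI, clarify)
    fix i j i' j' assume i: "i \<in> I" "i' \<in> I" and eq: "Y i $ j = Y i' $ j'"
    show "i = i' \<and> j = j'"
    proof (rule ccontr)
      assume "\<not> (i = i' \<and> j = j')"
      then have "P i $ j - P i' $ j' \<noteq> 0" using P_inj by auto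
      moreover have "of_real c * (P i $ j - P i' $ j') = Z i' $ j' - Z i $ j"
        using eq unfolding Y_def vector_add_component comp by (simp add: algebra_simps)
      ultimately have "of_real c = (Z i' $ j' - Z i $ j) / (P i $ j - P i' $ j')"
        by (simp add: field_simps)
      then have "c = Re ((Z i' $ j' - Z i $ j) / (P i $ j - P i' $ j'))"
        by (metis Re_complex_of_real)
      then have "c \<in> bad" using i unfolding bad_def D_def by force
      then show False using c by blast
    qed
  qed
  ultimately show ?thesis using that by blast
qed

lemma finite_norms_below:
  assumes "finite I" "I \<noteq> {}" "\<forall>i\<in>I. norm (Y i :: 'a::real_normed_vector) < c"
  obtains \<mu> where "0 < \<mu>" "\<mu> < c" "\<forall>i\<in>I. norm (Y i) \<le> \<mu>"
proof -
  define \<mu>\<^sub>0 where "\<mu>\<^sub>0 = Max (norm ` Y ` I)"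
  have "\<mu>\<^sub>0 < c" "\<forall>i\<in>I. norm (Y i) \<le> \<mu>\<^sub>0" "0 \<le> \<mu>\<^sub>0"
    using assms unfolding \<mu>\<^sub>0_def by (auto simp: Max_ge_iff Max_less_iff)
  then show ?thesis
    using that[of "(\<mu>\<^sub>0 + c) / 2"] by fastforce
qed

lemma power_series_initial_zeros:
  fixes h :: "nat \<Rightarrow> 'a::real_normed_field"
  assumes "summable (\<lambda>n. h (n + d) * z ^ n)" "\<And>m. m < d \<Longrightarrow> h m = 0"
  shows "(\<lambda>m. h m * z ^ m) sums (z ^ d * (\<Sum>n. h (n + d) * z ^ n))"
proof -
  have "(\<lambda>n. h (n + d) * z ^ (n + d)) sums (z ^ d * (\<Sum>n. h (n + d) * z ^ n))"
    using sums_mult[OF summable_sums[OF assms(1)], of "z ^ d"] by (simp add: power_add mult_ac)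
  then have "(\<lambda>m. h m * z ^ m) sums (z ^ d * (\<Sum>n. h (n + d) * z ^ n) + (\<Sum>i<d. h i * z ^ i))"
    using sums_iff_shift[of "\<lambda>m. h m * z ^ m" d] by simp
  then show ?thesis using assms(2) by simp
qed

section \<open>The entry \<open>(1, |u| + 1)\<close> of \<open>\<rho>(A)\<close>\<close>

lemma graded_decay_bidiag_word:
  fixes Y :: "nat \<Rightarrow> complex^'n::finite"
  assumes "b \<ge> 0" "\<mu> > 0" "\<mu> + b < 1" "\<forall>p\<in>{1..length w + 1}. norm (Y p) \<le> \<mu>"
    and "q \<in> {1..length w + 1}"
  shows "graded_decay (\<lambda>v. bidiag_word Y w 1 (of_real b) v 1 q) (\<mu> + b)"
  by unfold_locales (use bidiag_word_entry_sum_le[OF assms(1,2,4,5)] assms(1-3) in auto)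

lemma graded_decay_rho_word:
  fixes Z' :: "nat \<Rightarrow> complex^'n::finite"
  assumes "0 \<le> \<delta>" "\<delta> < 1" "\<forall>i\<in>{1..length w + 1}. norm (Z' i) < \<delta>"
    and "q \<in> {1..length w + 1}"
  obtains \<rho> where "graded_decay (\<lambda>v. rho_word Z' w \<delta> v 1 q) \<rho>"
proof -
  obtain \<mu> where "0 < \<mu>" "\<mu> < \<delta>" "\<forall>i\<in>{1..length w + 1}. norm (Z' i) \<le> \<mu>"
    using finite_norms_below[of "{1..length w + 1}" Z' \<delta>] assms(3) by auto
  then show ?thesis
    using that graded_decay_bidiag_word[of "1 - \<delta>" \<mu> w Z' q] assms
    unfolding rho_word_eq_bidiag_word by auto
qed

lemma rho_ext_eq_graded_pairing:
  fixes Z' :: "nat \<Rightarrow> complex^'n::finite"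
  assumes A: "disc_alg A" and \<delta>: "0 \<le> \<delta>" "\<delta> < 1" "\<forall>i\<in>{1..length w + 1}. norm (Z' i) < \<delta>"
    and q: "q \<in> {1..length w + 1}"
  shows "rho_ext Z' w \<delta> A 1 q = graded_pairing (\<lambda>v. rho_word Z' w \<delta> v 1 q) (A vacuum)"
proof -
  obtain \<rho> where "graded_decay (\<lambda>v. rho_word Z' w \<delta> v 1 q) \<rho>"
    using graded_decay_rho_word[OF \<delta> q] .
  moreover have "approx_seq A (SOME cs. approx_seq A cs)"
    using approx_seq_exists[OF A] by (rule someI_ex)
  ultimately have "(\<lambda>k. rho_poly Z' w \<delta> ((SOME cs. approx_seq A cs) k) 1 q)
      \<longlonglongrightarrow> graded_pairing (\<lambda>v. rho_word Z' w \<delta> v 1 q) (A vacuum)"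
    unfolding rho_poly_def by (rule graded_decay.graded_pairing_limit[OF _ A])
  then show ?thesis
    unfolding rho_ext_def by (rule limI)
qed

lemma graded_term_rescaled:
  assumes "a \<noteq> 0" "b \<noteq> 0" "b\<^sub>0 \<noteq> 0"
  shows "graded_term (\<lambda>v. bidiag_word Y w a b v 1 (d + 1)) x m * a ^ d =
    (b / b\<^sub>0) ^ d * (graded_term (\<lambda>v. bidiag_word Y w 1 b\<^sub>0 v 1 (d + 1)) x m * a ^ m)"
proof -
  have "x v * bidiag_word Y w a b v 1 (d + 1) * a ^ d =
      (b / b\<^sub>0) ^ d * (x v * bidiag_word Y w 1 b\<^sub>0 v 1 (d + 1) * a ^ m)"
    if "length v = m" for v
  proof -
    have "x v * bidiag_word Y w a b v 1 (d + 1) * a ^ d = x v * (a ^ d * bidiag_word Y w a b v 1 (d + 1))"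
      by (simp only: mult_ac)
    also have "\<dots> = x v * ((b / b\<^sub>0) ^ d * a ^ m * bidiag_word Y w 1 b\<^sub>0 v 1 (d + 1))"
      using that by (simp only: bidiag_word_rescale[OF assms])
    finally show ?thesis by (simp only: mult_ac)
  qed
  then show ?thesis
    unfolding graded_term_def sum_distrib_left sum_distrib_right by (intro sum.cong) auto
qed

lemma graded_term_bidiag_word_below:
  assumes "m < d"
  shows "graded_term (\<lambda>v. bidiag_word Y w a b v 1 (d + 1)) x m = 0"
  unfolding graded_term_def using assms
  by (intro sum.neutral) (auto intro!: bidiag_word_beyond_band)

lemma graded_term_bidiag_word_prefix:
  assumes "take (length u) w = u" "length u \<le> length w"
  shows "graded_term (\<lambda>v. bidiag_word Y w a b v 1 (length u + 1)) x (length u) = x u * b ^ length u"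
proof -
  have "bidiag_word Y w a b v 1 (length u + 1) = (if v = u then b ^ length u else 0)"
    if "length v = length u" for v
    using bidiag_word_band_edge[of 1 v w Y a b] that assms by auto
  then have "graded_term (\<lambda>v. bidiag_word Y w a b v 1 (length u + 1)) x (length u) =
      (\<Sum>v\<in>{v. length v = length u}. if v = u then x u * b ^ length u else 0)"
    unfolding graded_term_def by (intro sum.cong) auto
  also have "\<dots> = x u * b ^ length u"
    by (subst sum.delta[OF finite_lists_length]) simp
  finally show ?thesis .
qed

text \<open>Scaling the points by \<open>t\<close> turns the entry \<open>(1, d + 1)\<close> of \<open>\<rho>(A)\<close> into a power series
  in \<open>t\<close> whose coefficients do not depend on \<open>\<delta>\<close>.\<close>

lemma rho_ext_scaled_points:
  fixes Y :: "nat \<Rightarrow> complex^'n::finite"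
  assumes A: "disc_alg A" and \<delta>: "0 \<le> \<delta>" "\<delta> < 1" "\<forall>i\<in>{1..length w + 1}. norm (t *\<^sub>R Y i) < \<delta>"
    and t: "t > 0" and \<beta>: "\<beta> > 0" and q: "d + 1 \<in> {1..length w + 1}"
    and s: "(\<lambda>m. graded_term (\<lambda>v. bidiag_word Y w 1 (of_real \<beta>) v 1 (d + 1)) (A vacuum) m
              * of_real t ^ m) sums s"
  shows "of_real t ^ d * rho_ext (\<lambda>i. t *\<^sub>R Y i) w \<delta> A 1 (d + 1) =
    (of_real (1 - \<delta>) / of_real \<beta>) ^ d * s"
proof -
  let ?e = "\<lambda>v. rho_word (\<lambda>i. t *\<^sub>R Y i) w \<delta> v 1 (d + 1)"
  obtain \<rho> where decay: "graded_decay ?e \<rho>"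
    using graded_decay_rho_word[OF \<delta> q] .
  have "fock_vec (A vacuum)"
    using A fock_vec_vacuum unfolding disc_alg_def by blast
  then have "summable (graded_term ?e (A vacuum))"
    by (rule summable_norm_cancel[OF graded_decay.summable_graded_term[OF decay]])
  then have lhs: "(\<lambda>m. graded_term ?e (A vacuum) m * of_real t ^ d)
      sums (graded_pairing ?e (A vacuum) * of_real t ^ d)"
    unfolding graded_pairing_def by (intro sums_mult2 summable_sums)
  have e: "?e = (\<lambda>v. bidiag_word Y w (of_real t) (of_real (1 - \<delta>)) v 1 (d + 1))"
    unfolding rho_word_eq_bidiag_word bidiag_word_scaleR_points ..
  have "(\<lambda>m. graded_term ?e (A vacuum) m * of_real t ^ d) =
      (\<lambda>m. (of_real (1 - \<delta>) / of_real \<beta>) ^ d * (graded_term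
        (\<lambda>v. bidiag_word Y w 1 (of_real \<beta>) v 1 (d + 1)) (A vacuum) m * of_real t ^ m))"
    unfolding e using t \<beta> \<delta> by (intro ext graded_term_rescaled) simp_all
  then have rhs: "(\<lambda>m. graded_term ?e (A vacuum) m * of_real t ^ d)
      sums ((of_real (1 - \<delta>) / of_real \<beta>) ^ d * s)"
    using sums_mult[OF s] by simp
  show ?thesis
    using sums_unique2[OF lhs rhs]
    unfolding rho_ext_eq_graded_pairing[OF A \<delta> q] by (simp add: mult.commute)
qed

lemma exists_scaling_rho_ext_nonzero:
  fixes Y :: "nat \<Rightarrow> complex^'n::finite"
  assumes A: "disc_alg A" and u: "A vacuum u \<noteq> 0" "take (length u) w = u" "length u \<le> length w"
    and Y: "\<forall>i\<in>{1..length w + 1}. norm (Y i) < 1" and \<eta>: "\<eta> > 0"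
  obtains t where "0 < t" "t \<le> 1" "1 - t < \<eta>"
    "\<And>\<delta>. 0 \<le> \<delta> \<Longrightarrow> \<delta> < 1 \<Longrightarrow> \<forall>i\<in>{1..length w + 1}. norm (t *\<^sub>R Y i) < \<delta> \<Longrightarrow>
      rho_ext (\<lambda>i. t *\<^sub>R Y i) w \<delta> A 1 (length u + 1) \<noteq> 0"
proof -
  define d where "d = length u"
  define F where "F = A vacuum"
  have F: "fock_vec F" using A fock_vec_vacuum unfolding disc_alg_def F_def by blast
  have q: "d + 1 \<in> {1..length w + 1}" using u(3) by (simp add: d_def)
  obtain \<mu> where \<mu>: "0 < \<mu>" "\<mu> < 1" "\<forall>i\<in>{1..length w + 1}. norm (Y i) \<le> \<mu>"
    using finite_norms_below[of "{1..length w + 1}" Y 1] Y by auto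
  define \<beta> where "\<beta> = (1 - \<mu>) / 2"
  define H where "H v = bidiag_word Y w 1 (of_real \<beta>) v 1 (d + 1)" for v
  define h where "h m = graded_term H F m" for m
  have \<beta>: "0 < \<beta>" "0 < \<mu> + \<beta>" "\<mu> + \<beta> < 1"
    using \<mu> unfolding \<beta>_def by (simp_all add: field_simps)
  have "graded_decay H (\<mu> + \<beta>)"
    unfolding H_def by (rule graded_decay_bidiag_word) (use \<mu> \<beta> q in auto)
  then have h_bound: "norm (h (n + d)) \<le> (fnorm F * (\<mu> + \<beta>) ^ d) * (\<mu> + \<beta>) ^ n" for n
    using norm_graded_term_le[OF F graded_decay.sum_entries_le less_imp_le[OF \<beta>(2)], of H "n + d"]
    unfolding h_def by (simp add: power_add mult_ac)
  have h_zero: "h m = 0" if "m < d" for m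
    unfolding h_def H_def using that by (rule graded_term_bidiag_word_below)
  have "h d = F u * of_real \<beta> ^ d"
    unfolding h_def H_def d_def by (rule graded_term_bidiag_word_prefix[OF u(2,3)])
  then have "h (0 + d) \<noteq> 0" using u(1) \<beta> by (simp add: F_def)
  then obtain t where t: "0 < t" "t \<le> 1" "1 - t < \<eta>" and G: "(\<Sum>n. h (n + d) * of_real t ^ n) \<noteq> 0"
    using power_series_nonzero_near_one[of "\<lambda>n. h (n + d)", OF h_bound \<beta>(2,3) _ \<eta>] by blast
  have "summable (\<lambda>n. h (n + d) * of_real t ^ n)"
  proof (rule summable_power_series_bounded[OF h_bound \<beta>(2)])
    have "(\<mu> + \<beta>) * t < 1" using t \<beta> mult_left_le[of t "\<mu> + \<beta>"] by linarith
    then show "norm (complex_of_real t) < 1 / (\<mu> + \<beta>)" using t \<beta> by (simp add: field_simps)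
  qed
  then have sums: "(\<lambda>m. h m * of_real t ^ m) sums (of_real t ^ d * (\<Sum>n. h (n + d) * of_real t ^ n))"
    using h_zero by (rule power_series_initial_zeros)
  show ?thesis
  proof (rule that[OF t])
    fix \<delta> assume \<delta>: "0 \<le> \<delta>" "\<delta> < 1" "\<forall>i\<in>{1..length w + 1}. norm (t *\<^sub>R Y i) < \<delta>"
    have "of_real t ^ d * rho_ext (\<lambda>i. t *\<^sub>R Y i) w \<delta> A 1 (d + 1) =
        (of_real (1 - \<delta>) / of_real \<beta>) ^ d * (of_real t ^ d * (\<Sum>n. h (n + d) * of_real t ^ n))"
      using sums unfolding h_def H_def F_def by (rule rho_ext_scaled_points[OF A \<delta> t(1) \<beta>(1) q])
    then show "rho_ext (\<lambda>i. t *\<^sub>R Y i) w \<delta> A 1 (length u + 1) \<noteq> 0"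
      using G t \<beta> \<delta> by (auto simp: d_def)
  qed
qed

lemma exists_injective_points_near:
  fixes Z :: "nat \<Rightarrow> complex^'n::finite"
  assumes I: "finite I" "I \<noteq> {}" and Z: "\<forall>i\<in>I. norm (Z i) < 1" and \<epsilon>: "\<forall>i\<in>I. \<epsilon> i > 0"
  obtains \<eta> Y where "\<eta> > 0" "\<forall>i\<in>I. norm (Y i) < 1" "inj_on (\<lambda>(i, j). Y i $ j) (I \<times> UNIV)"
    "\<And>t i. 0 < t \<Longrightarrow> t \<le> 1 \<Longrightarrow> 1 - t < \<eta> \<Longrightarrow> i \<in> I \<Longrightarrow> norm (t *\<^sub>R Y i - Z i) < \<epsilon> i"
proof -
  define \<eta> where "\<eta> = Min ((\<lambda>i. min (\<epsilon> i / 2) ((1 - norm (Z i)) / 2)) ` I)"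
  have "\<eta> > 0"
    using I Z \<epsilon> unfolding \<eta>_def by (simp add: Min_gr_iff)
  moreover have "\<eta> \<le> min (\<epsilon> i / 2) ((1 - norm (Z i)) / 2)" if "i \<in> I" for i
    unfolding \<eta>_def using I(1) that by (intro Min_le) auto
  ultimately have \<eta>: "\<eta> > 0" "\<And>i. i \<in> I \<Longrightarrow> \<eta> \<le> min (\<epsilon> i / 2) ((1 - norm (Z i)) / 2)"
    by auto
  obtain Y where Y: "\<And>i. i \<in> I \<Longrightarrow> norm (Y i - Z i) < \<eta>" "inj_on (\<lambda>(i, j). Y i $ j) (I \<times> UNIV)"
    using exists_injective_perturbation[OF I(1) \<eta>(1)] by blast
  have Y_norm: "norm (Y i) < 1" if "i \<in> I" for i
    using norm_triangle_sub[of "Y i" "Z i"] Y(1)[OF that] \<eta>(2)[OF that] Z that by auto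
  have "norm (t *\<^sub>R Y i - Z i) < \<epsilon> i" if "0 < t" "t \<le> 1" "1 - t < \<eta>" "i \<in> I" for t i
  proof -
    have "t *\<^sub>R Y i - Y i = (t - 1) *\<^sub>R Y i"
      by (simp add: algebra_simps)
    then have "norm (t *\<^sub>R Y i - Y i) = (1 - t) * norm (Y i)"
      using that by simp
    also have "\<dots> \<le> 1 - t"
      using that Y_norm[of i] by (simp add: mult_left_le)
    finally show ?thesis
      using norm_triangle_ineq[of "t *\<^sub>R Y i - Y i" "Y i - Z i"] Y(1)[of i] \<eta>(2)[of i] that by auto
  qed
  then show ?thesis using that \<eta>(1) Y(2) Y_norm by blast
qed

lemma inj_on_scaleR_coordinates:
  assumes "t \<noteq> 0" "inj_on (\<lambda>(i, j). Y i $ j) S"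
  shows "inj_on (\<lambda>(i, j). (t *\<^sub>R Y i) $ j) S"
proof (rule inj_onI, clarify)
  fix i j i' j' assume S: "(i, j) \<in> S" "(i', j') \<in> S" and "(t *\<^sub>R Y i) $ j = (t *\<^sub>R Y i') $ j'"
  then have "Y i $ j = Y i' $ j'" using assms(1) by simp
  then show "i = i' \<and> j = j'" using inj_onD[OF assms(2) _ S] by simp
qed

theorem lemma4p4:
  fixes Z :: "nat \<Rightarrow> complex^'n::finite"
    and A :: "('n list \<Rightarrow> complex) \<Rightarrow> ('n list \<Rightarrow> complex)"
    and \<epsilon> :: "nat \<Rightarrow> real"
  assumes "CARD('n) \<ge> 2"
    and "\<forall>i\<ge>1. norm (Z i) < 1"
    and "disc_alg A"
    and "\<exists>f. fock_vec f \<and> (\<exists>w. A f w \<noteq> 0)"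
    and "\<forall>i\<ge>1. \<epsilon> i > 0"
  shows "\<exists>(w :: 'n list) (Z' :: nat \<Rightarrow> complex^'n). length w \<ge> 2 \<and>
           (\<forall>i\<in>{1..length w + 1}. norm (Z' i) < 1) \<and>
           inj_on (\<lambda>(i, j). Z' i $ j) ({1..length w + 1} \<times> UNIV) \<and>
           (\<forall>i\<in>{1..length w + 1}. norm (Z' i - Z i) < \<epsilon> i) \<and>
           (\<forall>\<delta>. 0 \<le> \<delta> \<and> \<delta> < 1 \<and> (\<forall>i\<in>{1..length w + 1}. norm (Z' i) < \<delta>) \<longrightarrow>
              (\<exists>i j. rho_ext Z' w \<delta> A i j \<noteq> 0))"
proof -
  obtain u where u: "A vacuum u \<noteq> 0"
    using disc_alg_symbol_nonzero[OF assms(3)] assms(4) by blast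
  obtain l :: 'n where True by blast
  define w where "w = u @ [l, l]"
  have w: "length w \<ge> 2" "take (length u) w = u" "length u \<le> length w"
    by (simp_all add: w_def)
  have "{1..length w + 1} \<noteq> {}" "\<forall>i\<in>{1..length w + 1}. norm (Z i) < 1"
    "\<forall>i\<in>{1..length w + 1}. \<epsilon> i > 0"
    using assms(2,5) by auto
  then obtain \<eta> Y where Y: "\<eta> > 0" "\<forall>i\<in>{1..length w + 1}. norm (Y i) < 1"
      "inj_on (\<lambda>(i, j). Y i $ j) ({1..length w + 1} \<times> UNIV)"
      "\<And>t i. 0 < t \<Longrightarrow> t \<le> 1 \<Longrightarrow> 1 - t < \<eta> \<Longrightarrow> i \<in> {1..length w + 1} \<Longrightarrow>
        norm (t *\<^sub>R Y i - Z i) < \<epsilon> i"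
    by (rule exists_injective_points_near[OF finite_atLeastAtMost]) blast
  obtain t where t: "0 < t" "t \<le> 1" "1 - t < \<eta>" and nonzero:
    "\<And>\<delta>. 0 \<le> \<delta> \<Longrightarrow> \<delta> < 1 \<Longrightarrow> \<forall>i\<in>{1..length w + 1}. norm (t *\<^sub>R Y i) < \<delta> \<Longrightarrow>
      rho_ext (\<lambda>i. t *\<^sub>R Y i) w \<delta> A 1 (length u + 1) \<noteq> 0"
    using exists_scaling_rho_ext_nonzero[OF assms(3) u w(2,3) Y(2,1)] by blast
  show ?thesis
  proof (intro exI[of _ w] exI[of _ "\<lambda>i. t *\<^sub>R Y i"] conjI allI impI)
    show "\<forall>i\<in>{1..length w + 1}. norm (t *\<^sub>R Y i) < 1"
      using t Y(2) by (auto intro: le_less_trans[OF mult_left_le_one_le])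
    show "inj_on (\<lambda>(i, j). (t *\<^sub>R Y i) $ j) ({1..length w + 1} \<times> UNIV)"
      using t(1) by (intro inj_on_scaleR_coordinates Y(3)) simp
    show "\<forall>i\<in>{1..length w + 1}. norm (t *\<^sub>R Y i - Z i) < \<epsilon> i"
      using Y(4) t by blast
    fix \<delta> assume "0 \<le> \<delta> \<and> \<delta> < 1 \<and> (\<forall>i\<in>{1..length w + 1}. norm (t *\<^sub>R Y i) < \<delta>)"
    then show "\<exists>i j. rho_ext (\<lambda>i. t *\<^sub>R Y i) w \<delta> A i j \<noteq> 0"
      using nonzero by blast
  qed (rule w(1))
qed

end
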